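(* Let $H$ be a complex Hilbert space, $A,B\in\mathbb{B}(H)$, $t\in[0,1]$, and let $\varphi,\psi,\varphi_1,\varphi_2,\psi_1,\psi_2:[0,1]\to\mathbb{R}$ be continuous. Then: (1) $\omega_t(0,\psi;A)=|\psi(t)|\,\omega(A)$ and $c_t(0,\psi;A)=|\psi(t)|\,c(A)$; (2) $\omega_t(\varphi,0;A)=|\varphi(t)|\,\omega(A)$ and $c_t(\varphi,0;A)=|\varphi(t)|\,c(A)$; (3) $\omega_t(1,1;A)=2\|\operatorname{Re}A\|$ and $c_t(1,1;A)=2c(\operatorname{Re}A)$; (4) $\omega_t(1,-1;A)=2\|\operatorname{Im}A\|$ and $c_t(1,-1;A)=2c(\operatorname{Im}A)$; (5) $\omega_t(\varphi,\psi;iA)=\omega_t(\varphi,-\psi;A)$; (6) $\frac12\|A\|_t\le\omega_t(\varphi,\psi;A)\le\|A\|_t$; (7) $\omega_t(\varphi,\psi;A)\le(|\varphi(t)|+|\psi(t)|)\,\omega(A)$ and $c_t(\varphi,\psi;A)\ge\big||\varphi(t)|-|\psi(t)|\big|\,c(A)$; (8) $\omega_t(\varphi,\varphi;A)=2|\varphi(t)|\,\omega(\operatorname{Re}A)=2|\varphi(t)|\,\|\operatorname{Re}A\|$; (9) $\omega_t(\psi,\psi;A)=2|\psi(t)|\,\omega(\operatorname{Re}A)=2|\psi(t)|\,\|\operatorname{Re}A\|$; (10) if $A=A^*$, then $\omega_t(\varphi,\psi;A)=|\varphi(t)+\psi(t)|\,\omega(A)=|\varphi(t)+\psi(t)|\,\|A\|$;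 (11) $\omega_t(\varphi,\psi;A)=\omega_t(\psi,\varphi;A^* )$; (12) if $A=A^*$, then $\omega_t(\varphi,\psi;A)=\omega_t(\psi,\varphi;A)$; (13) $\omega_t(\varphi,\psi;A+B)\le\omega_t(\varphi,\psi;A)+\omega_t(\varphi,\psi;B)$; (14) $c_t(\varphi,\psi;A+B)\le\omega_t(\varphi,\psi;A)+c_t(\varphi,\psi;B)$; (15) $\omega_t(\varphi,\psi;AB)\le(|\varphi(t)|+|\psi(t)|)\,\omega(AB)$; (16) $c_t(\varphi,\psi;AB)\le|\varphi(t)|\,c(AB)+|\psi(t)|\,\omega(AB)$; (17) $\|\varphi(t)AB+\psi(t)(AB)^*\|^2\le(|\varphi(t)|^2+|\psi(t)|^2)\|AB\|^2+|\varphi(t)\psi(t)|\,\omega((AB)^2)+|\varphi(t)\psi(t)|\,\omega((B^*A^* )^2)$; (18) $\omega_t(\varphi_1+\varphi_2,\psi_1+\psi_2;A)\le\omega_t(\varphi_1,\psi_1;A)+\omega_t(\varphi_2,\psi_2;A)$; (19) $c_t(\varphi,\psi;A)\ge\min\{|\varphi(t)+\psi(t)|,|\varphi(t)-\psi(t)|\}\,m(A)$, where $m(A)=\inf_{x\in S_1(H)}|\langle Ax,x\rangle|$.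
   Context: $\mathbb{B}(H)$ is the algebra of bounded linear operators on $H$, $S_1(H)=\{x\in H:\|x\|=1\}$. For $A\in\mathbb{B}(H)$: $\omega(A)=\sup_{x\in S_1(H)}|\langle Ax,x\rangle|$ (numerical radius), $c(A)=\inf_{x\in S_1(H)}|\langle Ax,x\rangle|$ (Crawford number), $\operatorname{Re}A=(A+A^* )/2$, $\operatorname{Im}A=(A-A^* )/(2i)$. For real-valued functions $\varphi,\psi$ on $[0,1]$ and $t\in[0,1]$: the weighted numerical radius $\omega_t(\varphi,\psi;A)=\sup_{x\in S_1(H)}|\langle(\varphi(t)A+\psi(t)A^* )x,x\rangle|$, the weighted Crawford number $c_t(\varphi,\psi;A)=\inf_{x\in S_1(H)}|\langle(\varphi(t)A+\psi(t)A^* )x,x\rangle|$, and the weighted norm $\|A\|_t=\|\varphi(t)A+\psi(t)A^*\|$. Numbers such as $0,1,-1$ in the weight slots denote constant functions. *)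

theory Defs
  imports "HOL-Analysis.Analysis"
begin

class chilbert = banach +
  fixes scaleC :: "complex \<Rightarrow> 'a \<Rightarrow> 'a" (infixr "*\<^sub>C" 75)
    and cinner :: "'a \<Rightarrow> 'a \<Rightarrow> complex"
  assumes scaleC_add_right: "a *\<^sub>C (x + y) = a *\<^sub>C x + a *\<^sub>C y"
    and scaleC_add_left: "(a + b) *\<^sub>C x = a *\<^sub>C x + b *\<^sub>C x"
    and scaleC_scaleC: "a *\<^sub>C (b *\<^sub>C x) = (a * b) *\<^sub>C x"
    and scaleC_one: "1 *\<^sub>C x = x"
    and scaleR_scaleC: "scaleR r x = complex_of_real r *\<^sub>C x"
    and cinner_add_left: "cinner (x + y) z = cinner x z + cinner y z"
    and cinner_scaleC_left: "cinner (a *\<^sub>C x) y = a * cinner x y"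
    and cinner_commute: "cinner y x = cnj (cinner x y)"
    and cinner_nonneg: "0 \<le> Re (cinner x x)"
    and cinner_eq_zero_iff: "cinner x x = 0 \<longleftrightarrow> x = 0"
    and norm_eq_sqrt_cinner: "norm x = sqrt (Re (cinner x x))"

definition clinear :: "('a::chilbert \<Rightarrow> 'a) \<Rightarrow> bool" where
  "clinear A \<longleftrightarrow> (\<forall>x y. A (x + y) = A x + A y) \<and> (\<forall>c x. A (c *\<^sub>C x) = c *\<^sub>C A x)"

definition bounded_clinear :: "('a::chilbert \<Rightarrow> 'a) \<Rightarrow> bool" where
  "bounded_clinear A \<longleftrightarrow> clinear A \<and> (\<exists>K. \<forall>x. norm (A x) \<le> norm x * K)"

definition adj :: "('a::chilbert \<Rightarrow> 'a) \<Rightarrow> ('a \<Rightarrow> 'a)" where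
  "adj A = (THE B. \<forall>x y. cinner (A x) y = cinner x (B y))"

definition unit_sphere :: "'a::chilbert set" where
  "unit_sphere = {x. norm x = 1}"

definition numrad :: "('a::chilbert \<Rightarrow> 'a) \<Rightarrow> real" where
  "numrad A = (SUP x\<in>unit_sphere. cmod (cinner (A x) x))"

definition crawford :: "('a::chilbert \<Rightarrow> 'a) \<Rightarrow> real" where
  "crawford A = (INF x\<in>unit_sphere. cmod (cinner (A x) x))"

definition op_add :: "('a::chilbert \<Rightarrow> 'a) \<Rightarrow> ('a \<Rightarrow> 'a) \<Rightarrow> ('a \<Rightarrow> 'a)" where
  "op_add A B = (\<lambda>x. A x + B x)"

definition op_scale :: "complex \<Rightarrow> ('a::chilbert \<Rightarrow> 'a) \<Rightarrow> ('a \<Rightarrow> 'a)" where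
  "op_scale c A = (\<lambda>x. c *\<^sub>C A x)"

definition ReOp :: "('a::chilbert \<Rightarrow> 'a) \<Rightarrow> ('a \<Rightarrow> 'a)" where
  "ReOp A = op_scale (1/2) (op_add A (adj A))"

definition ImOp :: "('a::chilbert \<Rightarrow> 'a) \<Rightarrow> ('a \<Rightarrow> 'a)" where
  "ImOp A = op_scale (1/(2*\<i>)) (op_add A (op_scale (-1) (adj A)))"

definition wop :: "(real \<Rightarrow> real) \<Rightarrow> (real \<Rightarrow> real) \<Rightarrow> real \<Rightarrow> ('a::chilbert \<Rightarrow> 'a) \<Rightarrow> ('a \<Rightarrow> 'a)" where
  "wop \<phi> \<psi> t A = op_add (op_scale (complex_of_real (\<phi> t)) A) (op_scale (complex_of_real (\<psi> t)) (adj A))"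

definition wnumrad :: "(real \<Rightarrow> real) \<Rightarrow> (real \<Rightarrow> real) \<Rightarrow> real \<Rightarrow> ('a::chilbert \<Rightarrow> 'a) \<Rightarrow> real" where
  "wnumrad \<phi> \<psi> t A = numrad (wop \<phi> \<psi> t A)"

definition wcrawford :: "(real \<Rightarrow> real) \<Rightarrow> (real \<Rightarrow> real) \<Rightarrow> real \<Rightarrow> ('a::chilbert \<Rightarrow> 'a) \<Rightarrow> real" where
  "wcrawford \<phi> \<psi> t A = crawford (wop \<phi> \<psi> t A)"

definition wnorm :: "(real \<Rightarrow> real) \<Rightarrow> (real \<Rightarrow> real) \<Rightarrow> real \<Rightarrow> ('a::chilbert \<Rightarrow> 'a) \<Rightarrow> real" where
  "wnorm \<phi> \<psi> t A = onorm (wop \<phi> \<psi> t A)"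

end

(*
  Everything is read off from quadratic forms. With z = <A x, x>, the weighted operator
  phi(t) A + psi(t) A* has quadratic form phi(t) z + psi(t) conj z, so the numerical radius and
  Crawford number identities and inequalities reduce, pointwise on the unit sphere, to elementary
  estimates for a z + b conj z with real a, b; for instance z + conj z = 2 Re z = 2 <Re A x, x>.
  The comparison of the norm with the numerical radius (a factor 2 in general, equality for
  self-adjoint operators) comes from polarisation, and the bound on the squared norm of
  phi(t) T + psi(t) T* with T = A B from expanding the square, whose cross term is
  2 phi(t) psi(t) Re <T^2 x, x>. Adjoints exist by the Riesz representation theorem, proved via
  the element of minimal norm on a closed affine hyperplane.
*)
theory Submission
  imports Defs
begin

lemma scaleC_of_real: "complex_of_real r *\<^sub>C (x::'a::chilbert) = r *\<^sub>R x"
  by (simp add: scaleR_scaleC)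

lemma scaleC_zero_left [simp]: "(0::complex) *\<^sub>C (x::'a::chilbert) = 0"
  by (metis of_real_0 scaleC_of_real scaleR_zero_left)

lemma scaleC_minus_left: "(- a) *\<^sub>C (x::'a::chilbert) = - (a *\<^sub>C x)"
proof -
  have "a *\<^sub>C x + (- a) *\<^sub>C x = 0"
    by (metis add.right_inverse scaleC_zero_left scaleC_add_left)
  then show ?thesis by (simp add: eq_neg_iff_add_eq_0 add.commute)
qed

lemma scaleC_minus1_left [simp]: "(- 1) *\<^sub>C (x::'a::chilbert) = - x"
  by (simp add: scaleC_minus_left scaleC_one)

lemma cinner_add_right: "cinner x (y + z) = cinner x y + cinner (x::'a::chilbert) z"
  by (metis cinner_add_left cinner_commute complex_cnj_add)

lemma cinner_scaleC_right: "cinner x (a *\<^sub>C y) = cnj a * cinner (x::'a::chilbert) y"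
  by (metis cinner_scaleC_left cinner_commute complex_cnj_mult)

lemma cinner_zero_left [simp]: "cinner 0 (y::'a::chilbert) = 0"
  by (metis cinner_scaleC_left scaleC_zero_left mult_zero_left)

lemma cinner_zero_right [simp]: "cinner (y::'a::chilbert) 0 = 0"
  by (metis cinner_commute cinner_zero_left complex_cnj_zero)

lemma cinner_minus_left: "cinner (- x) (y::'a::chilbert) = - cinner x y"
  by (metis scaleC_minus1_left cinner_scaleC_left mult_minus1)

lemma cinner_minus_right: "cinner y (- x::'a::chilbert) = - cinner y x"
  by (metis cinner_commute cinner_minus_left complex_cnj_minus)

lemma cinner_diff_left: "cinner (x - y) (z::'a::chilbert) = cinner x z - cinner y z"
  by (simp only: diff_conv_add_uminus cinner_add_left cinner_minus_left)

lemma cinner_diff_right: "cinner z (x - y::'a::chilbert) = cinner z x - cinner z y"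
  by (simp only: diff_conv_add_uminus cinner_add_right cinner_minus_right)

lemmas cinner_simps = cinner_add_left cinner_add_right cinner_scaleC_left cinner_scaleC_right
  cinner_diff_left cinner_diff_right cinner_minus_left cinner_minus_right

lemma cinner_self: "cinner x (x::'a::chilbert) = complex_of_real ((norm x)\<^sup>2)"
proof -
  have "Im (cinner x x) = Im (cnj (cinner x x))" using cinner_commute[of x x] by simp
  then have "Im (cinner x x) = 0" by simp
  then show ?thesis
    using cinner_nonneg[of x] by (simp add: norm_eq_sqrt_cinner complex_eq_iff)
qed

lemma power2_norm_eq_cinner: "(norm x)\<^sup>2 = Re (cinner x (x::'a::chilbert))"
  by (simp add: cinner_self)

lemma cmod_mult_self: "cmod a * cmod a = Re a * Re a + Im a * Im a"
  by (metis cmod_power2 power2_eq_square)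

lemma norm_scaleC: "norm (a *\<^sub>C x) = cmod a * norm (x::'a::chilbert)"
proof -
  have "(norm (a *\<^sub>C x))\<^sup>2 = (cmod a * norm x)\<^sup>2"
    unfolding power2_norm_eq_cinner cinner_simps
    by (simp add: power_mult_distrib power2_norm_eq_cinner[symmetric] complex_norm_square[symmetric]
        mult.assoc[symmetric] cmod_power2 power2_eq_square cmod_mult_self)
  then show ?thesis by (simp add: power2_eq_iff_nonneg)
qed

lemma power2_norm_add_scaleC:
  "(norm (x + a *\<^sub>C y))\<^sup>2
    = (norm x)\<^sup>2 + 2 * Re (cnj a * cinner x y) + (cmod a)\<^sup>2 * (norm (y::'a::chilbert))\<^sup>2"
proof -
  have "cinner y x = cnj (cinner x y)" by (rule cinner_commute)
  then show ?thesis
    unfolding power2_norm_eq_cinner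
    by (simp add: cinner_simps power2_norm_eq_cinner[symmetric] cmod_power2 power2_eq_square
        algebra_simps cmod_mult_self)
qed

lemma parallelogram_law:
  "(norm (x - y))\<^sup>2 = 2 * (norm x)\<^sup>2 + 2 * (norm y)\<^sup>2 - (norm (x + (y::'a::chilbert)))\<^sup>2"
  unfolding power2_norm_eq_cinner cinner_simps by simp

lemma cinner_cauchy_schwarz: "cmod (cinner x y) \<le> norm x * norm (y::'a::chilbert)"
proof (cases "y = 0")
  case True then show ?thesis by simp
next
  case False
  define n where "n = (norm y)\<^sup>2"
  define c where "c = cinner x y"
  have n: "n > 0" using False by (simp add: n_def)
  have "0 \<le> Re (cinner (of_real n *\<^sub>C x - c *\<^sub>C y) (of_real n *\<^sub>C x - c *\<^sub>C y))"
    by (rule cinner_nonneg)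
  also have "cinner (of_real n *\<^sub>C x - c *\<^sub>C y) (of_real n *\<^sub>C x - c *\<^sub>C y)
     = of_real n * of_real n * cinner x x - of_real n * cnj c * c - c * of_real n * cinner y x
       + c * cnj c * of_real n"
    unfolding cinner_simps by (simp add: c_def n_def cinner_self algebra_simps)
  also have "cinner y x = cnj c" by (simp add: c_def cinner_commute[of y x])
  finally have "0 \<le> n * (n * (norm x)\<^sup>2 - (cmod c)\<^sup>2)"
    by (simp add: cinner_self cmod_power2 algebra_simps power2_eq_square cmod_mult_self)
  then have "(cmod c)\<^sup>2 \<le> (norm x * norm y)\<^sup>2" using n
    by (simp add: zero_le_mult_iff n_def power_mult_distrib mult.commute)
  then show ?thesis unfolding c_def by (simp add: power2_le_iff_abs_le)
qed

lemma cinner_right_ext: "(\<And>x. cinner x a = cinner x b) \<Longrightarrow> a = (b::'a::chilbert)"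
  by (metis cinner_diff_right cinner_eq_zero_iff diff_eq_eq diff_self)

lemma min_norm_orthogonal:
  fixes u w :: "'a::chilbert"
  assumes min: "\<And>s. norm u \<le> norm (u + s *\<^sub>C w)"
  shows "cinner w u = 0"
proof -
  define c where "c = cinner w u"
  define e where "e = 1 / ((norm w)\<^sup>2 + 1)"
  have pos: "(norm w)\<^sup>2 + 1 > 0" by (simp add: add_nonneg_pos)
  then have e: "e > 0" by (simp add: e_def)
  have ew: "e * (norm w)\<^sup>2 < 1" using pos by (simp add: e_def field_simps)
  \<comment> \<open>a short step from \<open>u\<close> against its component along \<open>w\<close> would shorten \<open>u\<close>\<close>
  define s where "s = - complex_of_real e * cnj c"
  have "cinner u w = cnj c" by (simp add: c_def cinner_commute[of u w])
  have "(norm (u + s *\<^sub>C w))\<^sup>2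
      = (norm u)\<^sup>2 + 2 * Re (cnj s * cinner u w) + (cmod s)\<^sup>2 * (norm w)\<^sup>2"
    by (rule power2_norm_add_scaleC)
  also have "Re (cnj s * cinner u w) = - e * (cmod c)\<^sup>2"
    using \<open>cinner u w = cnj c\<close> by (simp add: s_def cmod_mult_self algebra_simps power2_eq_square)
  also have "(cmod s)\<^sup>2 = e\<^sup>2 * (cmod c)\<^sup>2"
    using e by (simp add: s_def norm_mult power_mult_distrib)
  finally have "(norm (u + s *\<^sub>C w))\<^sup>2 = (norm u)\<^sup>2 - e * (cmod c)\<^sup>2 * (2 - e * (norm w)\<^sup>2)"
    by (simp add: power2_eq_square algebra_simps)
  moreover have "(norm u)\<^sup>2 \<le> (norm (u + s *\<^sub>C w))\<^sup>2"
    using min[of s] by (simp add: power_mono)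
  ultimately have "e * (cmod c)\<^sup>2 * (2 - e * (norm w)\<^sup>2) \<le> 0" by simp
  with e ew have "(cmod c)\<^sup>2 \<le> 0" by (simp add: mult_le_0_iff zero_le_mult_iff)
  then show ?thesis unfolding c_def by simp
qed

text \<open>The minimising sequence is Cauchy by the parallelogram law, since all midpoints
  stay in the set.\<close>
lemma closed_convex_has_min_norm:
  fixes M :: "'a::chilbert set"
  assumes "closed M" "convex M" "M \<noteq> {}"
  obtains u where "u \<in> M" "\<And>v. v \<in> M \<Longrightarrow> norm u \<le> norm v"
proof -
  define d where "d = Inf ((\<lambda>v. (norm v)\<^sup>2) ` M)"
  have bdd: "bdd_below ((\<lambda>v. (norm v)\<^sup>2) ` M)" by (rule bdd_belowI[of _ 0]) auto
  have d_le: "d \<le> (norm v)\<^sup>2" if "v \<in> M" for v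
    unfolding d_def by (rule cInf_lower) (use bdd that in auto)
  have "\<exists>v\<in>M. (norm v)\<^sup>2 < d + 1 / real (Suc n)" for n
    using cInf_less_iff[OF _ bdd, of "d + 1 / real (Suc n)"] assms(3) by (simp add: d_def)
  then obtain X where X: "\<And>n. X n \<in> M" "\<And>n. (norm (X n))\<^sup>2 < d + 1 / real (Suc n)"
    by metis
  have dist_X: "(norm (X m - X n))\<^sup>2 \<le> 2 / real (Suc m) + 2 / real (Suc n)" for m n
  proof -
    have "(1/2) *\<^sub>R X m + (1/2) *\<^sub>R X n \<in> M" by (rule convexD[OF assms(2) X(1) X(1)]) auto
    then have "d \<le> (norm ((1/2) *\<^sub>R (X m + X n)))\<^sup>2"
      by (intro d_le) (simp add: scaleR_add_right)
    then have "d \<le> (norm (X m + X n))\<^sup>2 / 4" by (simp add: power_divide)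
    then show ?thesis using parallelogram_law[of "X m" "X n"] X(2)[of m] X(2)[of n] by simp
  qed
  have "Cauchy X"
  proof (rule CauchyI)
    fix e :: real assume "0 < e"
    then have e2: "0 < e\<^sup>2" by simp
    obtain N :: nat where "4 / e\<^sup>2 < real N" using reals_Archimedean2 by blast
    then have "4 < e\<^sup>2 * real N" by (simp only: pos_divide_less_eq[OF e2] mult.commute)
    then have "4 < e\<^sup>2 * real (Suc N)"
      using e2 unfolding of_nat_Suc distrib_left mult_1_right by linarith
    then have N: "4 / real (Suc N) < e\<^sup>2" by (simp add: pos_divide_less_eq)
    have "norm (X m - X n) < e" if "N \<le> m" "N \<le> n" for m n
    proof (rule power2_less_imp_less)
      have "2 / real (Suc m) \<le> 2 / real (Suc N)" "2 / real (Suc n) \<le> 2 / real (Suc N)"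
        using that by (auto intro!: frac_le)
      then show "(norm (X m - X n))\<^sup>2 < e\<^sup>2" using dist_X[of m n] N by linarith
    qed (use \<open>0 < e\<close> in simp)
    then show "\<exists>M. \<forall>m\<ge>M. \<forall>n\<ge>M. norm (X m - X n) < e" by blast
  qed
  then obtain u where lim: "X \<longlonglongrightarrow> u" using Cauchy_convergent_iff convergent_def by blast
  show ?thesis
  proof
    show "u \<in> M" by (rule closed_sequentially[OF assms(1) X(1) lim])
    have u_le: "(norm u)\<^sup>2 \<le> d"
    proof (rule LIMSEQ_le)
      show "(\<lambda>n. (norm (X n))\<^sup>2) \<longlonglongrightarrow> (norm u)\<^sup>2" by (intro tendsto_intros lim)
      show "(\<lambda>n. d + inverse (real (Suc n))) \<longlonglongrightarrow> d" by (rule LIMSEQ_inverse_real_of_nat_add)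
      show "\<exists>N. \<forall>n\<ge>N. (norm (X n))\<^sup>2 \<le> d + inverse (real (Suc n))"
        using X(2) by (auto simp: inverse_eq_divide intro: less_imp_le)
    qed
    show "norm u \<le> norm v" if "v \<in> M" for v
    proof (rule power2_le_imp_le)
      show "(norm u)\<^sup>2 \<le> (norm v)\<^sup>2" using u_le d_le[OF that] by linarith
    qed simp
  qed
qed

lemma riesz_representation:
  fixes f :: "'a::chilbert \<Rightarrow> complex"
  assumes add: "\<And>x y. f (x + y) = f x + f y" and scale: "\<And>c x. f (c *\<^sub>C x) = c * f x"
    and bound: "\<And>x. cmod (f x) \<le> norm x * K"
  obtains z where "\<And>x. f x = cinner x z"
proof (cases "\<forall>x. f x = 0")
  case True then show ?thesis by (intro that[of 0]) simp
next
  case False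
  then obtain x0 where x0: "f x0 \<noteq> 0" by auto
  have lin: "bounded_linear f"
    by (rule bounded_linear_intro[OF add _ bound])
      (simp add: scaleC_of_real[symmetric] scale scaleR_conv_of_real)
  define M where "M = f -` {1}"
  have "closed M" unfolding M_def
    by (intro continuous_closed_vimage closed_singleton) (rule linear_continuous_at[OF lin])
  moreover have "convex M"
  proof (rule convexI)
    fix x y and u v :: real assume "x \<in> M" "y \<in> M" "u + v = 1"
    then show "u *\<^sub>R x + v *\<^sub>R y \<in> M"
      by (simp add: M_def add scale flip: scaleC_of_real of_real_add)
  qed
  moreover have "(1 / f x0) *\<^sub>C x0 \<in> M" using x0 by (simp add: M_def scale)
  ultimately obtain u where u: "u \<in> M" "\<And>v. v \<in> M \<Longrightarrow> norm u \<le> norm v"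
    using closed_convex_has_min_norm by blast
  have orth: "cinner w u = 0" if "f w = 0" for w
    using u that by (intro min_norm_orthogonal) (simp add: M_def add scale)
  have "u \<noteq> 0" using u(1) scale[of 0 0] by (auto simp: M_def)
  show ?thesis
  proof (rule that[of "complex_of_real (1 / (norm u)\<^sup>2) *\<^sub>C u"])
    fix x
    have "f (x + (- f x) *\<^sub>C u) = 0" using u(1) by (simp add: M_def add scale)
    then have "cinner (x + (- f x) *\<^sub>C u) u = 0" by (rule orth)
    then have "cinner x u = f x * complex_of_real ((norm u)\<^sup>2)"
      by (simp add: cinner_simps cinner_self)
    then show "f x = cinner x (complex_of_real (1 / (norm u)\<^sup>2) *\<^sub>C u)"
      using \<open>u \<noteq> 0\<close> by (simp add: cinner_simps field_simps)
  qed
qed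

lemma bounded_clinear_add: "bounded_clinear A \<Longrightarrow> A (x + y) = A x + A y"
  by (simp add: bounded_clinear_def clinear_def)

lemma bounded_clinear_scaleC: "bounded_clinear A \<Longrightarrow> A (c *\<^sub>C x) = c *\<^sub>C A x"
  by (simp add: bounded_clinear_def clinear_def)

lemma bounded_clinear_zero: "bounded_clinear A \<Longrightarrow> A 0 = 0"
  using bounded_clinear_scaleC[of A 0 0] by simp

lemma bounded_clinear_imp_bounded_linear: "bounded_clinear A \<Longrightarrow> bounded_linear A"
  unfolding bounded_clinear_def clinear_def
  by (metis bounded_linear_intro scaleC_of_real)

lemma bounded_clinearI:
  assumes "\<And>x y. A (x + y) = A x + A y" "\<And>c x. A (c *\<^sub>C x) = c *\<^sub>C A x"
    and "\<And>x. norm (A x) \<le> norm x * K"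
  shows "bounded_clinear A"
  using assms unfolding bounded_clinear_def clinear_def by blast

lemma bounded_clinear_onorm:
  "bounded_clinear A \<Longrightarrow> norm (A x) \<le> onorm A * norm x"
  by (rule onorm[OF bounded_clinear_imp_bounded_linear])

lemma bounded_clinear_op_add:
  assumes A: "bounded_clinear A" and B: "bounded_clinear B"
  shows "bounded_clinear (op_add A B)"
proof (rule bounded_clinearI[where K = "onorm A + onorm B"])
  show "norm (op_add A B x) \<le> norm x * (onorm A + onorm B)" for x
    using bounded_clinear_onorm[OF A, of x] bounded_clinear_onorm[OF B, of x]
      norm_triangle_ineq[of "A x" "B x"]
    by (simp add: op_add_def algebra_simps)
qed (simp_all add: op_add_def bounded_clinear_add[OF A] bounded_clinear_add[OF B]
    bounded_clinear_scaleC[OF A] bounded_clinear_scaleC[OF B] scaleC_add_right)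

lemma bounded_clinear_op_scale:
  assumes A: "bounded_clinear A"
  shows "bounded_clinear (op_scale c A)"
proof (rule bounded_clinearI[where K = "cmod c * onorm A"])
  show "norm (op_scale c A x) \<le> norm x * (cmod c * onorm A)" for x
    using mult_left_mono[OF bounded_clinear_onorm[OF A, of x], of "cmod c"]
    by (simp add: op_scale_def norm_scaleC algebra_simps)
qed (simp_all add: op_scale_def bounded_clinear_add[OF A] bounded_clinear_scaleC[OF A]
    scaleC_add_right scaleC_scaleC mult.commute)

lemma bounded_clinear_comp:
  assumes A: "bounded_clinear A" and B: "bounded_clinear B"
  shows "bounded_clinear (A \<circ> B)"
proof (rule bounded_clinearI[where K = "onorm A * onorm B"])
  fix x
  have "norm (A (B x)) \<le> onorm A * norm (B x)" by (rule bounded_clinear_onorm[OF A])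
  also have "\<dots> \<le> onorm A * (onorm B * norm x)"
    using bounded_clinear_onorm[OF B] onorm_pos_le[OF bounded_clinear_imp_bounded_linear[OF A]]
    by (simp add: mult_left_mono)
  finally show "norm ((A \<circ> B) x) \<le> norm x * (onorm A * onorm B)" by (simp add: algebra_simps)
qed (simp_all add: bounded_clinear_add[OF A] bounded_clinear_add[OF B]
    bounded_clinear_scaleC[OF A] bounded_clinear_scaleC[OF B])

lemma adj_eqI:
  assumes "\<And>x y. cinner (A x) y = cinner x (C y)"
  shows "adj A = C"
  unfolding adj_def
proof (rule the_equality)
  show "\<forall>x y. cinner (A x) y = cinner x (C y)" using assms by blast
  show "B = C" if "\<forall>x y. cinner (A x) y = cinner x (B y)" for B
    using that assms by (metis cinner_right_ext ext)
qed

lemma cinner_adj_right: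
  assumes A: "bounded_clinear A"
  shows "cinner (A x) y = cinner x (adj A y)"
proof -
  have "\<exists>z. \<forall>x. cinner (A x) y = cinner x z" for y
  proof -
    have "cmod (cinner (A x) y) \<le> norm x * (onorm A * norm y)" for x
    proof -
      have "cmod (cinner (A x) y) \<le> norm (A x) * norm y" by (rule cinner_cauchy_schwarz)
      also have "\<dots> \<le> onorm A * norm x * norm y"
        by (rule mult_right_mono[OF bounded_clinear_onorm[OF A]]) simp
      finally show ?thesis by (simp add: algebra_simps)
    qed
    then obtain z where "\<And>x. cinner (A x) y = cinner x z"
      by (rule riesz_representation[rotated 2])
        (simp_all add: bounded_clinear_add[OF A] bounded_clinear_scaleC[OF A] cinner_simps)
    then show ?thesis by blast
  qed
  then obtain C where "\<And>x y. cinner (A x) y = cinner x (C y)" by metis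
  moreover from this have "adj A = C" by (rule adj_eqI)
  ultimately show ?thesis by simp
qed

lemma cinner_adj_left: "bounded_clinear A \<Longrightarrow> cinner (adj A x) y = cinner x (A y)"
  by (metis cinner_adj_right cinner_commute)

lemma cinner_adj_self: "bounded_clinear A \<Longrightarrow> cinner (adj A x) x = cnj (cinner (A x) x)"
  by (metis cinner_adj_right cinner_commute)

lemma norm_adj_le:
  assumes A: "bounded_clinear A"
  shows "norm (adj A y) \<le> onorm A * norm y"
proof -
  have "(norm (adj A y))\<^sup>2 = Re (cinner (A (adj A y)) y)"
    by (simp add: power2_norm_eq_cinner cinner_adj_right[OF A])
  also have "\<dots> \<le> norm (A (adj A y)) * norm y"
    using complex_Re_le_cmod cinner_cauchy_schwarz order_trans by blast
  also have "\<dots> \<le> onorm A * norm (adj A y) * norm y"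
    using bounded_clinear_onorm[OF A] by (simp add: mult_right_mono)
  finally have "norm (adj A y) * norm (adj A y) \<le> norm (adj A y) * (onorm A * norm y)"
    by (simp add: power2_eq_square algebra_simps)
  then show ?thesis
    using onorm_pos_le[OF bounded_clinear_imp_bounded_linear[OF A]]
    by (cases "adj A y = 0") simp_all
qed

lemma bounded_clinear_adj:
  assumes A: "bounded_clinear A"
  shows "bounded_clinear (adj A)"
proof (rule bounded_clinearI[where K = "onorm A"])
  show "adj A (x + y) = adj A x + adj A y" for x y
    by (rule cinner_right_ext) (simp add: cinner_adj_right[OF A, symmetric] cinner_add_right)
  show "adj A (c *\<^sub>C x) = c *\<^sub>C adj A x" for c x
    by (rule cinner_right_ext) (simp add: cinner_adj_right[OF A, symmetric] cinner_scaleC_right)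
  show "norm (adj A x) \<le> norm x * onorm A" for x
    using norm_adj_le[OF A] by (simp add: mult.commute)
qed

lemma adj_comp:
  "bounded_clinear A \<Longrightarrow> bounded_clinear B \<Longrightarrow> adj (A \<circ> B) = adj B \<circ> adj A"
  by (rule adj_eqI) (simp add: cinner_adj_right)

lemma unit_sphere_nonempty:
  assumes "\<exists>x::'a::chilbert. x \<noteq> 0"
  shows "(unit_sphere :: 'a set) \<noteq> {}"
proof -
  obtain x :: 'a where "x \<noteq> 0" using assms by blast
  then have "complex_of_real (1 / norm x) *\<^sub>C x \<in> unit_sphere"
    by (simp add: unit_sphere_def norm_scaleC norm_divide)
  then show ?thesis by blast
qed

lemma cmod_cinner_le_onorm:
  assumes "bounded_clinear T"
  shows "cmod (cinner (T x) x) \<le> onorm T * (norm x)\<^sup>2"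
proof -
  have "cmod (cinner (T x) x) \<le> norm (T x) * norm x" by (rule cinner_cauchy_schwarz)
  also have "\<dots> \<le> onorm T * norm x * norm x"
    by (rule mult_right_mono[OF bounded_clinear_onorm[OF assms]]) simp
  finally show ?thesis by (simp add: power2_eq_square mult.assoc)
qed

lemma numrad_upper:
  assumes "bounded_clinear T" "x \<in> unit_sphere"
  shows "cmod (cinner (T x) x) \<le> numrad T"
  unfolding numrad_def
proof (rule cSUP_upper[OF assms(2)])
  show "bdd_above ((\<lambda>x. cmod (cinner (T x) x)) ` unit_sphere)"
  proof (rule bdd_aboveI2)
    fix x :: 'a assume "x \<in> unit_sphere"
    then show "cmod (cinner (T x) x) \<le> onorm T"
      using cmod_cinner_le_onorm[OF assms(1), of x] by (simp add: unit_sphere_def)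
  qed
qed

lemma numrad_least:
  "(unit_sphere :: 'a::chilbert set) \<noteq> {} \<Longrightarrow>
    (\<And>x. x \<in> unit_sphere \<Longrightarrow> cmod (cinner (T x) x) \<le> b) \<Longrightarrow> numrad (T :: 'a \<Rightarrow> 'a) \<le> b"
  unfolding numrad_def by (rule cSUP_least)

lemma numrad_nonneg:
  "(unit_sphere :: 'a::chilbert set) \<noteq> {} \<Longrightarrow> bounded_clinear (T :: 'a \<Rightarrow> 'a) \<Longrightarrow> 0 \<le> numrad T"
  by (metis all_not_in_conv norm_ge_zero numrad_upper order_trans)

lemma crawford_lower: "x \<in> unit_sphere \<Longrightarrow> crawford T \<le> cmod (cinner (T x) x)"
  unfolding crawford_def by (rule cINF_lower) (auto intro: bdd_belowI[of _ 0])

lemma crawford_greatest: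
  "(unit_sphere :: 'a::chilbert set) \<noteq> {} \<Longrightarrow>
    (\<And>x. x \<in> unit_sphere \<Longrightarrow> b \<le> cmod (cinner (T x) x)) \<Longrightarrow> b \<le> crawford (T :: 'a \<Rightarrow> 'a)"
  unfolding crawford_def by (rule cINF_greatest)

lemma cmod_cinner_le_numrad:
  assumes T: "bounded_clinear T"
  shows "cmod (cinner (T x) x) \<le> numrad T * (norm x)\<^sup>2"
proof (cases "x = 0")
  case True then show ?thesis by (simp add: bounded_clinear_zero[OF T])
next
  case False
  define u where "u = complex_of_real (1 / norm x) *\<^sub>C x"
  have u: "u \<in> unit_sphere" using False by (simp add: u_def unit_sphere_def norm_scaleC norm_divide)
  have x_eq: "x = complex_of_real (norm x) *\<^sub>C u" using False
    by (simp add: u_def scaleC_scaleC scaleC_one)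
  have "cinner (T x) x = complex_of_real ((norm x)\<^sup>2) * cinner (T u) u"
    by (subst (1 2) x_eq)
      (simp add: bounded_clinear_scaleC[OF T] cinner_simps power2_eq_square)
  then have "cmod (cinner (T x) x) = (norm x)\<^sup>2 * cmod (cinner (T u) u)"
    by (simp add: norm_mult norm_power)
  also have "\<dots> \<le> (norm x)\<^sup>2 * numrad T" using numrad_upper[OF T u] by (simp add: mult_left_mono)
  finally show ?thesis by (simp add: mult.commute)
qed

lemma numrad_cong:
  "(\<And>x. x \<in> unit_sphere \<Longrightarrow> cmod (cinner (S x) x) = cmod (cinner (T x) x)) \<Longrightarrow> numrad S = numrad T"
  unfolding numrad_def by (rule SUP_cong) simp_all

lemma numrad_le_onorm:
  assumes "(unit_sphere :: 'a::chilbert set) \<noteq> {}" "bounded_clinear (T :: 'a \<Rightarrow> 'a)"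
  shows "numrad T \<le> onorm T"
proof (rule numrad_least[OF assms(1)])
  fix x :: 'a assume "x \<in> unit_sphere"
  then show "cmod (cinner (T x) x) \<le> onorm T"
    using cmod_cinner_le_onorm[OF assms(2), of x] by (simp add: unit_sphere_def)
qed

lemma numrad_le_scaled:
  assumes ne: "(unit_sphere :: 'a::chilbert set) \<noteq> {}" and T: "bounded_clinear T" and "0 \<le> c"
    and le: "\<And>x. x \<in> unit_sphere \<Longrightarrow> cmod (cinner (S x) x) \<le> c * cmod (cinner (T x) x)"
  shows "numrad (S :: 'a \<Rightarrow> 'a) \<le> c * numrad T"
proof (rule numrad_least[OF ne])
  fix x :: 'a assume x: "x \<in> unit_sphere"
  have "c * cmod (cinner (T x) x) \<le> c * numrad T"
    by (rule mult_left_mono[OF numrad_upper[OF T x] \<open>0 \<le> c\<close>])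
  with le[OF x] show "cmod (cinner (S x) x) \<le> c * numrad T" by linarith
qed

lemma numrad_le_add:
  assumes ne: "(unit_sphere :: 'a::chilbert set) \<noteq> {}"
    and T: "bounded_clinear T" and U: "bounded_clinear U"
    and le: "\<And>x. x \<in> unit_sphere \<Longrightarrow>
      cmod (cinner (S x) x) \<le> cmod (cinner (T x) x) + cmod (cinner (U x) x)"
  shows "numrad (S :: 'a \<Rightarrow> 'a) \<le> numrad T + numrad U"
proof (rule numrad_least[OF ne])
  fix x :: 'a assume x: "x \<in> unit_sphere"
  show "cmod (cinner (S x) x) \<le> numrad T + numrad U"
    using le[OF x] numrad_upper[OF T x] numrad_upper[OF U x] by linarith
qed

lemma crawford_ge_scaled:
  assumes ne: "(unit_sphere :: 'a::chilbert set) \<noteq> {}" and "0 \<le> c"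
    and le: "\<And>x. x \<in> unit_sphere \<Longrightarrow> c * cmod (cinner (T x) x) \<le> cmod (cinner (S x) x)"
  shows "c * crawford T \<le> crawford (S :: 'a \<Rightarrow> 'a)"
proof (rule crawford_greatest[OF ne])
  fix x :: 'a assume x: "x \<in> unit_sphere"
  have "c * crawford T \<le> c * cmod (cinner (T x) x)"
    by (rule mult_left_mono[OF crawford_lower[OF x] \<open>0 \<le> c\<close>])
  with le[OF x] show "c * crawford T \<le> cmod (cinner (S x) x)" by linarith
qed

lemma crawford_le_combination:
  assumes ne: "(unit_sphere :: 'a::chilbert set) \<noteq> {}" and U: "bounded_clinear U"
    and "0 \<le> a" "0 \<le> b"
    and le: "\<And>x. x \<in> unit_sphere \<Longrightarrow>
      cmod (cinner (S x) x) \<le> a * cmod (cinner (T x) x) + b * cmod (cinner (U x) x)"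
  shows "crawford (S :: 'a \<Rightarrow> 'a) \<le> a * crawford T + b * numrad U"
proof -
  have S_le: "crawford S \<le> a * cmod (cinner (T x) x) + b * numrad U" if x: "x \<in> unit_sphere" for x
    using crawford_lower[OF x, of S] le[OF x] mult_left_mono[OF numrad_upper[OF U x] \<open>0 \<le> b\<close>]
    by linarith
  show ?thesis
  proof (cases "a = 0")
    case True
    obtain x :: 'a where "x \<in> unit_sphere" using ne by blast
    then show ?thesis using S_le True by simp
  next
    case False
    then have "0 < a" using \<open>0 \<le> a\<close> by simp
    have "(crawford S - b * numrad U) / a \<le> crawford T"
    proof (rule crawford_greatest[OF ne])
      fix x :: 'a assume "x \<in> unit_sphere"
      then show "(crawford S - b * numrad U) / a \<le> cmod (cinner (T x) x)"
        using S_le[of x] \<open>0 < a\<close> by (simp add: pos_divide_le_eq mult.commute)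
    qed
    then show ?thesis using \<open>0 < a\<close> by (simp add: pos_divide_le_eq mult.commute)
  qed
qed

lemma numrad_eq_scaled:
  assumes ne: "(unit_sphere :: 'a::chilbert set) \<noteq> {}"
    and S: "bounded_clinear S" and T: "bounded_clinear T" and "0 \<le> c"
    and eq: "\<And>x. x \<in> unit_sphere \<Longrightarrow> cmod (cinner (S x) x) = c * cmod (cinner (T x) x)"
  shows "numrad (S :: 'a \<Rightarrow> 'a) = c * numrad T"
proof (rule antisym)
  show "numrad S \<le> c * numrad T" by (rule numrad_le_scaled[OF ne T \<open>0 \<le> c\<close>]) (simp add: eq)
  show "c * numrad T \<le> numrad S"
  proof (cases "c = 0")
    case True then show ?thesis using numrad_nonneg[OF ne S] by simp
  next
    case False
    then have "numrad T \<le> (1 / c) * numrad S"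
      by (intro numrad_le_scaled[OF ne S]) (use \<open>0 \<le> c\<close> in \<open>simp_all add: eq\<close>)
    then show ?thesis using False \<open>0 \<le> c\<close> by (simp add: field_simps)
  qed
qed

lemma crawford_eq_scaled:
  assumes ne: "(unit_sphere :: 'a::chilbert set) \<noteq> {}" and "0 \<le> c"
    and eq: "\<And>x. x \<in> unit_sphere \<Longrightarrow> cmod (cinner (S x) x) = c * cmod (cinner (T x) x)"
  shows "crawford (S :: 'a \<Rightarrow> 'a) = c * crawford T"
proof (rule antisym)
  show "c * crawford T \<le> crawford S" by (rule crawford_ge_scaled[OF ne \<open>0 \<le> c\<close>]) (simp add: eq)
  show "crawford S \<le> c * crawford T"
  proof (cases "c = 0")
    case True
    obtain x :: 'a where "x \<in> unit_sphere" using ne by blast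
    then show ?thesis using crawford_lower[of x S] eq True by simp
  next
    case False
    then have "(1 / c) * crawford S \<le> crawford T"
      by (intro crawford_ge_scaled[OF ne]) (use \<open>0 \<le> c\<close> in \<open>simp_all add: eq\<close>)
    then show ?thesis using False \<open>0 \<le> c\<close> by (simp add: field_simps)
  qed
qed

lemma numrad_adj:
  assumes "(unit_sphere :: 'a::chilbert set) \<noteq> {}" "bounded_clinear (T :: 'a \<Rightarrow> 'a)"
  shows "numrad (adj T) = numrad T"
  by (rule numrad_cong) (simp add: cinner_adj_self[OF assms(2)])

lemma cinner_apply_add_scaleC:
  assumes "bounded_clinear T"
  shows "cinner (T (x + a *\<^sub>C y)) (x + a *\<^sub>C y)
    = cinner (T x) x + a * cinner (T y) x + cnj a * cinner (T x) y + a * cnj a * cinner (T y) y"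
  by (simp add: bounded_clinear_add[OF assms] bounded_clinear_scaleC[OF assms] cinner_simps
      algebra_simps)

text \<open>Testing against the vector \<open>y\<close> of length \<open>\<parallel>x\<parallel>\<close> in the direction of \<open>T x\<close>
  gives \<open>Re \<langle>T x, y\<rangle> = \<parallel>x\<parallel> \<parallel>T x\<parallel>\<close>.\<close>
lemma onorm_le_if_Re_cinner_le:
  assumes T: "bounded_clinear T" and "0 \<le> c"
    and le: "\<And>x y. norm y = norm x \<Longrightarrow> Re (cinner (T x) y) \<le> c * (norm x)\<^sup>2"
  shows "onorm T \<le> c"
proof (rule onorm_bound[OF \<open>0 \<le> c\<close>])
  fix x
  show "norm (T x) \<le> c * norm x"
  proof (cases "T x = 0")
    case True then show ?thesis using \<open>0 \<le> c\<close> by simp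
  next
    case False
    then have "x \<noteq> 0" using bounded_clinear_zero[OF T] by auto
    define y where "y = complex_of_real (norm x / norm (T x)) *\<^sub>C T x"
    have "norm y = norm x" using False by (simp add: y_def norm_scaleC norm_divide)
    have "norm x * norm (T x) = Re (cinner (T x) y)"
      using False by (simp add: y_def cinner_scaleC_right cinner_self power2_eq_square)
    also have "\<dots> \<le> c * (norm x)\<^sup>2" using le[OF \<open>norm y = norm x\<close>] .
    finally have "norm x * norm (T x) \<le> norm x * (c * norm x)"
      by (simp add: power2_eq_square algebra_simps)
    then show ?thesis using \<open>x \<noteq> 0\<close> by simp
  qed
qed

lemma onorm_le_2_numrad:
  assumes ne: "(unit_sphere :: 'a::chilbert set) \<noteq> {}" and T: "bounded_clinear (T :: 'a \<Rightarrow> 'a)"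
  shows "onorm T \<le> 2 * numrad T"
proof (rule onorm_le_if_Re_cinner_le[OF T])
  show "0 \<le> 2 * numrad T" using numrad_nonneg[OF ne T] by simp
  fix x y :: 'a assume "norm y = norm x"
  define q where "q a = cinner (T (x + a *\<^sub>C y)) (x + a *\<^sub>C y)" for a
  have q_le: "cmod (q a) \<le> numrad T * (norm (x + a *\<^sub>C y))\<^sup>2" for a
    unfolding q_def by (rule cmod_cinner_le_numrad[OF T])
  have polar: "4 * cinner (T x) y = (q 1 - q (- 1)) + \<i> * (q \<i> - q (- \<i>))"
    unfolding q_def cinner_apply_add_scaleC[OF T] by (simp add: algebra_simps)
  have "4 * Re (cinner (T x) y) = Re ((q 1 - q (- 1)) + \<i> * (q \<i> - q (- \<i>)))"
    unfolding polar[symmetric] by simp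
  also have "\<dots> \<le> cmod ((q 1 - q (- 1)) + \<i> * (q \<i> - q (- \<i>)))" by (rule complex_Re_le_cmod)
  also have "\<dots> \<le> cmod (q 1 - q (- 1)) + cmod (q \<i> - q (- \<i>))"
    by (metis norm_triangle_ineq norm_mult norm_ii mult_1_left)
  also have "\<dots> \<le> cmod (q 1) + cmod (q (- 1)) + (cmod (q \<i>) + cmod (q (- \<i>)))"
    by (intro add_mono norm_triangle_ineq4)
  also have "\<dots> \<le> numrad T * ((norm (x + 1 *\<^sub>C y))\<^sup>2 + (norm (x + (- 1) *\<^sub>C y))\<^sup>2
      + (norm (x + \<i> *\<^sub>C y))\<^sup>2 + (norm (x + (- \<i>) *\<^sub>C y))\<^sup>2)"
    using q_le[of 1] q_le[of "- 1"] q_le[of \<i>] q_le[of "- \<i>"] by (simp add: distrib_left)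
  also have "\<dots> = 4 * (2 * numrad T * (norm x)\<^sup>2)"
    using \<open>norm y = norm x\<close> unfolding power2_norm_add_scaleC by simp
  finally show "Re (cinner (T x) y) \<le> 2 * numrad T * (norm x)\<^sup>2" by simp
qed

lemma onorm_le_numrad_if_selfadjoint:
  assumes ne: "(unit_sphere :: 'a::chilbert set) \<noteq> {}" and T: "bounded_clinear (T :: 'a \<Rightarrow> 'a)"
    and sa: "adj T = T"
  shows "onorm T \<le> numrad T"
proof (rule onorm_le_if_Re_cinner_le[OF T])
  show "0 \<le> numrad T" using numrad_nonneg[OF ne T] .
  fix x y :: 'a assume "norm y = norm x"
  define q where "q a = cinner (T (x + a *\<^sub>C y)) (x + a *\<^sub>C y)" for a
  have q_le: "cmod (q a) \<le> numrad T * (norm (x + a *\<^sub>C y))\<^sup>2" for a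
    unfolding q_def by (rule cmod_cinner_le_numrad[OF T])
  have "cinner (T y) x = cnj (cinner (T x) y)"
    using cinner_adj_right[OF T, of y x] by (simp add: sa cinner_commute[of y "T x"])
  then have "4 * Re (cinner (T x) y) = Re (q 1 - q (- 1))"
    unfolding q_def cinner_apply_add_scaleC[OF T] by simp
  also have "\<dots> \<le> cmod (q 1) + cmod (q (- 1))"
    by (rule order_trans[OF complex_Re_le_cmod norm_triangle_ineq4])
  also have "\<dots> \<le> numrad T * ((norm (x + 1 *\<^sub>C y))\<^sup>2 + (norm (x + (- 1) *\<^sub>C y))\<^sup>2)"
    using q_le[of 1] q_le[of "- 1"] by (simp add: distrib_left)
  also have "\<dots> = 4 * (numrad T * (norm x)\<^sup>2)"
    using \<open>norm y = norm x\<close> unfolding power2_norm_add_scaleC by simp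
  finally show "Re (cinner (T x) y) \<le> numrad T * (norm x)\<^sup>2" by simp
qed

lemma numrad_eq_onorm_if_selfadjoint:
  assumes "(unit_sphere :: 'a::chilbert set) \<noteq> {}" "bounded_clinear (T :: 'a \<Rightarrow> 'a)" "adj T = T"
  shows "numrad T = onorm T"
  using numrad_le_onorm[OF assms(1,2)] onorm_le_numrad_if_selfadjoint[OF assms] by simp

lemma cmod_real_comb_cnj_le:
  "cmod (complex_of_real a * z + complex_of_real b * cnj z) \<le> (\<bar>a\<bar> + \<bar>b\<bar>) * cmod z"
proof -
  have "cmod (complex_of_real a * z + complex_of_real b * cnj z)
      \<le> cmod (complex_of_real a * z) + cmod (complex_of_real b * cnj z)"
    by (rule norm_triangle_ineq)
  also have "\<dots> = (\<bar>a\<bar> + \<bar>b\<bar>) * cmod z" by (simp add: norm_mult distrib_right)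
  finally show ?thesis .
qed

lemma cmod_real_comb_cnj_ge:
  "\<bar>\<bar>a\<bar> - \<bar>b\<bar>\<bar> * cmod z \<le> cmod (complex_of_real a * z + complex_of_real b * cnj z)"
proof -
  have "cmod (complex_of_real a * z) - cmod (complex_of_real b * cnj z)
      \<le> cmod (complex_of_real a * z + complex_of_real b * cnj z)"
    by (rule norm_diff_ineq)
  moreover have "cmod (complex_of_real b * cnj z) - cmod (complex_of_real a * z)
      \<le> cmod (complex_of_real a * z + complex_of_real b * cnj z)"
    by (metis add.commute norm_diff_ineq)
  ultimately show ?thesis by (simp add: norm_mult abs_if left_diff_distrib split: if_splits)
qed

text \<open>With \<open>z = u + i v\<close> one has \<open>\<bar>a z + b z\<^sup>*\<bar>\<^sup>2 = (a + b)\<^sup>2 u\<^sup>2 + (a - b)\<^sup>2 v\<^sup>2\<close>.\<close>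
lemma cmod_real_comb_cnj_ge_min:
  "min \<bar>a + b\<bar> \<bar>a - b\<bar> * cmod z \<le> cmod (complex_of_real a * z + complex_of_real b * cnj z)"
proof (rule power2_le_imp_le)
  define m where "m = min \<bar>a + b\<bar> \<bar>a - b\<bar>"
  have "0 \<le> m" by (simp add: m_def)
  then have "m\<^sup>2 \<le> (a + b)\<^sup>2" "m\<^sup>2 \<le> (a - b)\<^sup>2"
    using power_mono[of m "\<bar>a + b\<bar>" 2] power_mono[of m "\<bar>a - b\<bar>" 2] by (simp_all add: m_def)
  then have "m\<^sup>2 * (Re z)\<^sup>2 + m\<^sup>2 * (Im z)\<^sup>2 \<le> (a + b)\<^sup>2 * (Re z)\<^sup>2 + (a - b)\<^sup>2 * (Im z)\<^sup>2"
    by (intro add_mono mult_right_mono) auto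
  moreover have "(m * cmod z)\<^sup>2 = m\<^sup>2 * (Re z)\<^sup>2 + m\<^sup>2 * (Im z)\<^sup>2"
    by (simp add: cmod_power2 power_mult_distrib algebra_simps)
  moreover have "(cmod (complex_of_real a * z + complex_of_real b * cnj z))\<^sup>2
      = (a + b)\<^sup>2 * (Re z)\<^sup>2 + (a - b)\<^sup>2 * (Im z)\<^sup>2"
    by (simp add: cmod_power2 power2_eq_square algebra_simps cmod_mult_self)
  ultimately show "(min \<bar>a + b\<bar> \<bar>a - b\<bar> * cmod z)\<^sup>2
      \<le> (cmod (complex_of_real a * z + complex_of_real b * cnj z))\<^sup>2"
    by (simp add: m_def)
qed simp

lemma bounded_clinear_wop: "bounded_clinear A \<Longrightarrow> bounded_clinear (wop \<phi> \<psi> t A)"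
  unfolding wop_def by (intro bounded_clinear_op_add bounded_clinear_op_scale bounded_clinear_adj)

lemma cinner_wop_self:
  "bounded_clinear A \<Longrightarrow> cinner (wop \<phi> \<psi> t A x) x
    = complex_of_real (\<phi> t) * cinner (A x) x + complex_of_real (\<psi> t) * cnj (cinner (A x) x)"
  by (simp add: wop_def op_add_def op_scale_def cinner_add_left cinner_scaleC_left cinner_adj_self)

lemma bounded_clinear_ReOp: "bounded_clinear A \<Longrightarrow> bounded_clinear (ReOp A)"
  unfolding ReOp_def by (intro bounded_clinear_op_add bounded_clinear_op_scale bounded_clinear_adj)

lemma bounded_clinear_ImOp: "bounded_clinear A \<Longrightarrow> bounded_clinear (ImOp A)"
  unfolding ImOp_def by (intro bounded_clinear_op_add bounded_clinear_op_scale bounded_clinear_adj)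

lemma cinner_ReOp_self:
  assumes A: "bounded_clinear A"
  shows "cinner (ReOp A x) x = complex_of_real (Re (cinner (A x) x))"
  by (simp add: ReOp_def op_scale_def op_add_def cinner_simps cinner_adj_self[OF A] complex_add_cnj)

lemma cinner_ImOp_self:
  assumes A: "bounded_clinear A"
  shows "cinner (ImOp A x) x = complex_of_real (Im (cinner (A x) x))"
  by (simp add: ImOp_def op_scale_def op_add_def cinner_simps cinner_adj_self[OF A] complex_diff_cnj
      algebra_simps)

lemma adj_ReOp:
  assumes A: "bounded_clinear A"
  shows "adj (ReOp A) = ReOp A"
  by (rule adj_eqI) (simp add: ReOp_def op_scale_def op_add_def cinner_simps
      cinner_adj_right[OF A] cinner_adj_left[OF A] add.commute)

lemma adj_ImOp:
  assumes A: "bounded_clinear A"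
  shows "adj (ImOp A) = ImOp A"
  by (rule adj_eqI) (simp add: ImOp_def op_scale_def op_add_def cinner_simps
      cinner_adj_right[OF A] cinner_adj_left[OF A] algebra_simps)

context
  fixes A :: "'a::chilbert \<Rightarrow> 'a"
  assumes ne: "(unit_sphere :: 'a set) \<noteq> {}" and A: "bounded_clinear A"
begin

lemma wnumrad_zero_left: "wnumrad (\<lambda>_. 0) \<psi> t A = \<bar>\<psi> t\<bar> * numrad A"
  unfolding wnumrad_def
  by (rule numrad_eq_scaled[OF ne bounded_clinear_wop[OF A] A])
    (simp_all add: cinner_wop_self[OF A] norm_mult)

lemma wcrawford_zero_left: "wcrawford (\<lambda>_. 0) \<psi> t A = \<bar>\<psi> t\<bar> * crawford A"
  unfolding wcrawford_def
  by (rule crawford_eq_scaled[OF ne]) (simp_all add: cinner_wop_self[OF A] norm_mult)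

lemma wnumrad_zero_right: "wnumrad \<phi> (\<lambda>_. 0) t A = \<bar>\<phi> t\<bar> * numrad A"
  unfolding wnumrad_def
  by (rule numrad_eq_scaled[OF ne bounded_clinear_wop[OF A] A])
    (simp_all add: cinner_wop_self[OF A] norm_mult)

lemma wcrawford_zero_right: "wcrawford \<phi> (\<lambda>_. 0) t A = \<bar>\<phi> t\<bar> * crawford A"
  unfolding wcrawford_def
  by (rule crawford_eq_scaled[OF ne]) (simp_all add: cinner_wop_self[OF A] norm_mult)

lemma cmod_cinner_wop_diag:
  "cmod (cinner (wop \<phi> \<phi> t A x) x) = 2 * \<bar>\<phi> t\<bar> * cmod (cinner (ReOp A x) x)"
  by (simp add: cinner_wop_self[OF A] cinner_ReOp_self[OF A] norm_mult complex_add_cnj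
      flip: distrib_left)

lemma cmod_cinner_wop_antidiag:
  "cmod (cinner (wop \<phi> (\<lambda>s. - \<phi> s) t A x) x) = 2 * \<bar>\<phi> t\<bar> * cmod (cinner (ImOp A x) x)"
  by (simp add: cinner_wop_self[OF A] cinner_ImOp_self[OF A] norm_mult complex_diff_cnj
      flip: right_diff_distrib)

lemma wnumrad_diag: "wnumrad \<phi> \<phi> t A = 2 * \<bar>\<phi> t\<bar> * numrad (ReOp A)"
  unfolding wnumrad_def
  by (rule numrad_eq_scaled[OF ne bounded_clinear_wop[OF A] bounded_clinear_ReOp[OF A]])
    (simp_all add: cmod_cinner_wop_diag)

lemma wcrawford_diag: "wcrawford \<phi> \<phi> t A = 2 * \<bar>\<phi> t\<bar> * crawford (ReOp A)"
  unfolding wcrawford_def by (rule crawford_eq_scaled[OF ne]) (simp_all add: cmod_cinner_wop_diag)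

lemma wnumrad_antidiag: "wnumrad \<phi> (\<lambda>s. - \<phi> s) t A = 2 * \<bar>\<phi> t\<bar> * numrad (ImOp A)"
  unfolding wnumrad_def
  by (rule numrad_eq_scaled[OF ne bounded_clinear_wop[OF A] bounded_clinear_ImOp[OF A]])
    (simp_all add: cmod_cinner_wop_antidiag)

lemma wcrawford_antidiag: "wcrawford \<phi> (\<lambda>s. - \<phi> s) t A = 2 * \<bar>\<phi> t\<bar> * crawford (ImOp A)"
  unfolding wcrawford_def
  by (rule crawford_eq_scaled[OF ne]) (simp_all add: cmod_cinner_wop_antidiag)

lemma numrad_ReOp: "numrad (ReOp A) = onorm (ReOp A)"
  by (rule numrad_eq_onorm_if_selfadjoint[OF ne bounded_clinear_ReOp[OF A] adj_ReOp[OF A]])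

lemma numrad_ImOp: "numrad (ImOp A) = onorm (ImOp A)"
  by (rule numrad_eq_onorm_if_selfadjoint[OF ne bounded_clinear_ImOp[OF A] adj_ImOp[OF A]])

lemma wnumrad_op_scale_ii: "wnumrad \<phi> \<psi> t (op_scale \<i> A) = wnumrad \<phi> (\<lambda>s. - \<psi> s) t A"
proof -
  have iA: "bounded_clinear (op_scale \<i> A)" by (rule bounded_clinear_op_scale[OF A])
  have "cinner (wop \<phi> \<psi> t (op_scale \<i> A) x) x = \<i> * cinner (wop \<phi> (\<lambda>s. - \<psi> s) t A x) x" for x
    unfolding cinner_wop_self[OF iA] cinner_wop_self[OF A]
    by (simp add: op_scale_def cinner_scaleC_left algebra_simps)
  then show ?thesis unfolding wnumrad_def by (intro numrad_cong) (simp add: norm_mult)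
qed

lemma wnumrad_le_wnorm: "wnumrad \<phi> \<psi> t A \<le> wnorm \<phi> \<psi> t A"
  unfolding wnumrad_def wnorm_def by (rule numrad_le_onorm[OF ne bounded_clinear_wop[OF A]])

lemma wnorm_le_2_wnumrad: "wnorm \<phi> \<psi> t A \<le> 2 * wnumrad \<phi> \<psi> t A"
  unfolding wnumrad_def wnorm_def by (rule onorm_le_2_numrad[OF ne bounded_clinear_wop[OF A]])

lemma wnumrad_le_numrad: "wnumrad \<phi> \<psi> t A \<le> (\<bar>\<phi> t\<bar> + \<bar>\<psi> t\<bar>) * numrad A"
  unfolding wnumrad_def
  by (rule numrad_le_scaled[OF ne A]) (simp_all add: cinner_wop_self[OF A] cmod_real_comb_cnj_le)

lemma wcrawford_ge_crawford: "\<bar>\<bar>\<phi> t\<bar> - \<bar>\<psi> t\<bar>\<bar> * crawford A \<le> wcrawford \<phi> \<psi> t A"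
  unfolding wcrawford_def
  by (rule crawford_ge_scaled[OF ne]) (simp_all add: cinner_wop_self[OF A] cmod_real_comb_cnj_ge)

lemma wcrawford_ge_min_crawford:
  "min \<bar>\<phi> t + \<psi> t\<bar> \<bar>\<phi> t - \<psi> t\<bar> * crawford A \<le> wcrawford \<phi> \<psi> t A"
  unfolding wcrawford_def
  by (rule crawford_ge_scaled[OF ne]) (simp_all add: cinner_wop_self[OF A] cmod_real_comb_cnj_ge_min)

lemma wcrawford_le_crawford_numrad:
  "wcrawford \<phi> \<psi> t A \<le> \<bar>\<phi> t\<bar> * crawford A + \<bar>\<psi> t\<bar> * numrad A"
  unfolding wcrawford_def
  by (rule crawford_le_combination[OF ne A])
    (simp_all add: cinner_wop_self[OF A] cmod_real_comb_cnj_le distrib_right[symmetric])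

lemma wnumrad_selfadjoint:
  assumes "adj A = A"
  shows "wnumrad \<phi> \<psi> t A = \<bar>\<phi> t + \<psi> t\<bar> * numrad A"
proof -
  have "cnj (cinner (A x) x) = cinner (A x) x" for x
    using cinner_adj_self[OF A, of x] assms by simp
  then show ?thesis
    unfolding wnumrad_def
    by (intro numrad_eq_scaled[OF ne bounded_clinear_wop[OF A] A])
      (simp_all add: cinner_wop_self[OF A] norm_mult flip: distrib_right of_real_add)
qed

lemma wnumrad_adj: "wnumrad \<phi> \<psi> t A = wnumrad \<psi> \<phi> t (adj A)"
  unfolding wnumrad_def
  by (rule numrad_cong) (simp add: cinner_wop_self[OF A] cinner_wop_self[OF bounded_clinear_adj[OF A]]
      cinner_adj_self[OF A] add.commute)

lemma wnumrad_add_weights_le: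
  "wnumrad (\<lambda>s. \<phi>1 s + \<phi>2 s) (\<lambda>s. \<psi>1 s + \<psi>2 s) t A \<le> wnumrad \<phi>1 \<psi>1 t A + wnumrad \<phi>2 \<psi>2 t A"
  unfolding wnumrad_def
proof (rule numrad_le_add[OF ne bounded_clinear_wop[OF A] bounded_clinear_wop[OF A]])
  fix x :: 'a
  have "cinner (wop (\<lambda>s. \<phi>1 s + \<phi>2 s) (\<lambda>s. \<psi>1 s + \<psi>2 s) t A x) x
      = cinner (wop \<phi>1 \<psi>1 t A x) x + cinner (wop \<phi>2 \<psi>2 t A x) x"
    by (simp add: cinner_wop_self[OF A] algebra_simps)
  then show "cmod (cinner (wop (\<lambda>s. \<phi>1 s + \<phi>2 s) (\<lambda>s. \<psi>1 s + \<psi>2 s) t A x) x)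
      \<le> cmod (cinner (wop \<phi>1 \<psi>1 t A x) x) + cmod (cinner (wop \<phi>2 \<psi>2 t A x) x)"
    by (simp add: norm_triangle_ineq)
qed

end

lemma cinner_wop_op_add_self:
  assumes A: "bounded_clinear A" and B: "bounded_clinear B"
  shows "cinner (wop \<phi> \<psi> t (op_add A B) x) x = cinner (wop \<phi> \<psi> t A x) x + cinner (wop \<phi> \<psi> t B x) x"
  unfolding cinner_wop_self[OF bounded_clinear_op_add[OF A B]] cinner_wop_self[OF A]
    cinner_wop_self[OF B]
  by (simp add: op_add_def cinner_add_left algebra_simps)

lemma wnumrad_op_add_le:
  assumes ne: "(unit_sphere :: 'a::chilbert set) \<noteq> {}"
    and A: "bounded_clinear (A :: 'a \<Rightarrow> 'a)" and B: "bounded_clinear B"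
  shows "wnumrad \<phi> \<psi> t (op_add A B) \<le> wnumrad \<phi> \<psi> t A + wnumrad \<phi> \<psi> t B"
  unfolding wnumrad_def
  by (rule numrad_le_add[OF ne bounded_clinear_wop[OF A] bounded_clinear_wop[OF B]])
    (simp add: cinner_wop_op_add_self[OF A B] norm_triangle_ineq)

lemma wcrawford_op_add_le:
  assumes ne: "(unit_sphere :: 'a::chilbert set) \<noteq> {}"
    and A: "bounded_clinear (A :: 'a \<Rightarrow> 'a)" and B: "bounded_clinear B"
  shows "wcrawford \<phi> \<psi> t (op_add A B) \<le> wnumrad \<phi> \<psi> t A + wcrawford \<phi> \<psi> t B"
proof -
  have "crawford (wop \<phi> \<psi> t (op_add A B)) \<le> 1 * crawford (wop \<phi> \<psi> t B) + 1 * numrad (wop \<phi> \<psi> t A)"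
    by (rule crawford_le_combination[OF ne bounded_clinear_wop[OF A]])
      (simp_all add: cinner_wop_op_add_self[OF A B] norm_triangle_ineq add.commute)
  then show ?thesis unfolding wnumrad_def wcrawford_def by simp
qed

lemma power2_onorm_le:
  assumes "bounded_linear f" "0 \<le> K" and le: "\<And>x. (norm (f x))\<^sup>2 \<le> K * (norm x)\<^sup>2"
  shows "(onorm f)\<^sup>2 \<le> K"
proof -
  have "onorm f \<le> sqrt K"
  proof (rule onorm_bound)
    show "norm (f x) \<le> sqrt K * norm x" for x
      using real_sqrt_le_mono[OF le[of x]] by (simp add: real_sqrt_mult)
  qed (simp add: \<open>0 \<le> K\<close>)
  then show ?thesis
    using power_mono[OF _ onorm_pos_le[OF assms(1)], of "sqrt K" 2] \<open>0 \<le> K\<close> by simp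
qed

lemma power2_norm_wop_apply:
  assumes T: "bounded_clinear T"
  shows "(norm (wop \<phi> \<psi> t T x))\<^sup>2 = (\<phi> t)\<^sup>2 * (norm (T x))\<^sup>2 + (\<psi> t)\<^sup>2 * (norm (adj T x))\<^sup>2
    + 2 * (\<phi> t * \<psi> t) * Re (cinner (T (T x)) x)"
proof -
  have c1: "cinner (T x) (adj T x) = cinner (T (T x)) x" by (rule cinner_adj_right[OF T, symmetric])
  have c2: "cinner (adj T x) (T x) = cnj (cinner (T (T x)) x)" by (metis c1 cinner_commute)
  have "cinner (wop \<phi> \<psi> t T x) (wop \<phi> \<psi> t T x)
      = complex_of_real ((\<phi> t)\<^sup>2 * (norm (T x))\<^sup>2 + (\<psi> t)\<^sup>2 * (norm (adj T x))\<^sup>2)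
        + complex_of_real (\<phi> t * \<psi> t) * (cinner (T (T x)) x + cnj (cinner (T (T x)) x))"
    unfolding wop_def op_add_def op_scale_def cinner_add_left cinner_add_right cinner_scaleC_left
      cinner_scaleC_right c1 c2 cinner_self[of "T x"] cinner_self[of "adj T x"]
    by (simp add: algebra_simps power2_eq_square)
  then show ?thesis unfolding power2_norm_eq_cinner by (simp add: complex_add_cnj)
qed

lemma power2_onorm_wop_le:
  assumes ne: "(unit_sphere :: 'a::chilbert set) \<noteq> {}" and T: "bounded_clinear (T :: 'a \<Rightarrow> 'a)"
  shows "(onorm (wop \<phi> \<psi> t T))\<^sup>2
    \<le> ((\<phi> t)\<^sup>2 + (\<psi> t)\<^sup>2) * (onorm T)\<^sup>2 + 2 * \<bar>\<phi> t * \<psi> t\<bar> * numrad (T \<circ> T)"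
proof (rule power2_onorm_le[OF bounded_clinear_imp_bounded_linear[OF bounded_clinear_wop[OF T]]])
  have TT: "bounded_clinear (T \<circ> T)" by (rule bounded_clinear_comp[OF T T])
  show "0 \<le> ((\<phi> t)\<^sup>2 + (\<psi> t)\<^sup>2) * (onorm T)\<^sup>2 + 2 * \<bar>\<phi> t * \<psi> t\<bar> * numrad (T \<circ> T)"
    using numrad_nonneg[OF ne TT] by simp
  fix x
  have "(\<phi> t)\<^sup>2 * (norm (T x))\<^sup>2 \<le> (\<phi> t)\<^sup>2 * (onorm T * norm x)\<^sup>2"
    by (intro mult_left_mono power_mono bounded_clinear_onorm[OF T]) simp_all
  moreover have "(\<psi> t)\<^sup>2 * (norm (adj T x))\<^sup>2 \<le> (\<psi> t)\<^sup>2 * (onorm T * norm x)\<^sup>2"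
    by (intro mult_left_mono power_mono norm_adj_le[OF T]) simp_all
  moreover have "\<phi> t * \<psi> t * Re (cinner (T (T x)) x) \<le> \<bar>\<phi> t * \<psi> t\<bar> * (numrad (T \<circ> T) * (norm x)\<^sup>2)"
  proof -
    have "\<phi> t * \<psi> t * Re (cinner (T (T x)) x) \<le> \<bar>\<phi> t * \<psi> t\<bar> * \<bar>Re (cinner (T (T x)) x)\<bar>"
      using abs_ge_self[of "\<phi> t * \<psi> t * Re (cinner (T (T x)) x)"] by (simp only: abs_mult)
    also have "\<dots> \<le> \<bar>\<phi> t * \<psi> t\<bar> * cmod (cinner (T (T x)) x)"
      by (rule mult_left_mono[OF abs_Re_le_cmod abs_ge_zero])
    also have "\<dots> \<le> \<bar>\<phi> t * \<psi> t\<bar> * (numrad (T \<circ> T) * (norm x)\<^sup>2)"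
      using cmod_cinner_le_numrad[OF TT, of x] by (simp add: mult_left_mono)
    finally show ?thesis .
  qed
  moreover have "(((\<phi> t)\<^sup>2 + (\<psi> t)\<^sup>2) * (onorm T)\<^sup>2 + 2 * \<bar>\<phi> t * \<psi> t\<bar> * numrad (T \<circ> T)) * (norm x)\<^sup>2
      = (\<phi> t)\<^sup>2 * (onorm T * norm x)\<^sup>2 + (\<psi> t)\<^sup>2 * (onorm T * norm x)\<^sup>2
        + 2 * (\<bar>\<phi> t * \<psi> t\<bar> * (numrad (T \<circ> T) * (norm x)\<^sup>2))"
    by (simp add: power_mult_distrib algebra_simps)
  ultimately show "(norm (wop \<phi> \<psi> t T x))\<^sup>2
      \<le> (((\<phi> t)\<^sup>2 + (\<psi> t)\<^sup>2) * (onorm T)\<^sup>2 + 2 * \<bar>\<phi> t * \<psi> t\<bar> * numrad (T \<circ> T)) * (norm x)\<^sup>2"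
    unfolding power2_norm_wop_apply[OF T] by linarith
qed

theorem proposition2p1:
  fixes A B :: "'a::chilbert \<Rightarrow> 'a"
    and \<phi> \<psi> \<phi>1 \<phi>2 \<psi>1 \<psi>2 :: "real \<Rightarrow> real"
    and t :: real
  assumes nontriv: "\<exists>x::'a. x \<noteq> 0"
    and A: "bounded_clinear A" and B: "bounded_clinear B"
    and t: "t \<in> {0..1}"
    and cont: "continuous_on {0..1} \<phi>" "continuous_on {0..1} \<psi>"
      "continuous_on {0..1} \<phi>1" "continuous_on {0..1} \<phi>2"
      "continuous_on {0..1} \<psi>1" "continuous_on {0..1} \<psi>2"
  shows "(wnumrad (\<lambda>_. 0) \<psi> t A = \<bar>\<psi> t\<bar> * numrad A \<and>
     wcrawford (\<lambda>_. 0) \<psi> t A = \<bar>\<psi> t\<bar> * crawford A)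
  \<and> (wnumrad \<phi> (\<lambda>_. 0) t A = \<bar>\<phi> t\<bar> * numrad A \<and>
     wcrawford \<phi> (\<lambda>_. 0) t A = \<bar>\<phi> t\<bar> * crawford A)
  \<and> (wnumrad (\<lambda>_. 1) (\<lambda>_. 1) t A = 2 * onorm (ReOp A) \<and>
     wcrawford (\<lambda>_. 1) (\<lambda>_. 1) t A = 2 * crawford (ReOp A))
  \<and> (wnumrad (\<lambda>_. 1) (\<lambda>_. -1) t A = 2 * onorm (ImOp A) \<and>
     wcrawford (\<lambda>_. 1) (\<lambda>_. -1) t A = 2 * crawford (ImOp A))
  \<and> (wnumrad \<phi> \<psi> t (op_scale \<i> A) = wnumrad \<phi> (\<lambda>s. - \<psi> s) t A)
  \<and> (wnorm \<phi> \<psi> t A / 2 \<le> wnumrad \<phi> \<psi> t A \<and> wnumrad \<phi> \<psi> t A \<le> wnorm \<phi> \<psi> t A)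
  \<and> (wnumrad \<phi> \<psi> t A \<le> (\<bar>\<phi> t\<bar> + \<bar>\<psi> t\<bar>) * numrad A \<and>
     wcrawford \<phi> \<psi> t A \<ge> \<bar>\<bar>\<phi> t\<bar> - \<bar>\<psi> t\<bar>\<bar> * crawford A)
  \<and> (wnumrad \<phi> \<phi> t A = 2 * \<bar>\<phi> t\<bar> * numrad (ReOp A) \<and>
     2 * \<bar>\<phi> t\<bar> * numrad (ReOp A) = 2 * \<bar>\<phi> t\<bar> * onorm (ReOp A))
  \<and> (wnumrad \<psi> \<psi> t A = 2 * \<bar>\<psi> t\<bar> * numrad (ReOp A) \<and>
     2 * \<bar>\<psi> t\<bar> * numrad (ReOp A) = 2 * \<bar>\<psi> t\<bar> * onorm (ReOp A))
  \<and> (adj A = A \<longrightarrow>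
     wnumrad \<phi> \<psi> t A = \<bar>\<phi> t + \<psi> t\<bar> * numrad A \<and>
     \<bar>\<phi> t + \<psi> t\<bar> * numrad A = \<bar>\<phi> t + \<psi> t\<bar> * onorm A)
  \<and> (wnumrad \<phi> \<psi> t A = wnumrad \<psi> \<phi> t (adj A))
  \<and> (adj A = A \<longrightarrow> wnumrad \<phi> \<psi> t A = wnumrad \<psi> \<phi> t A)
  \<and> (wnumrad \<phi> \<psi> t (op_add A B) \<le> wnumrad \<phi> \<psi> t A + wnumrad \<phi> \<psi> t B)
  \<and> (wcrawford \<phi> \<psi> t (op_add A B) \<le> wnumrad \<phi> \<psi> t A + wcrawford \<phi> \<psi> t B)
  \<and> (wnumrad \<phi> \<psi> t (A \<circ> B) \<le> (\<bar>\<phi> t\<bar> + \<bar>\<psi> t\<bar>) * numrad (A \<circ> B))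
  \<and> (wcrawford \<phi> \<psi> t (A \<circ> B) \<le> \<bar>\<phi> t\<bar> * crawford (A \<circ> B) + \<bar>\<psi> t\<bar> * numrad (A \<circ> B))
  \<and> ((onorm (wop \<phi> \<psi> t (A \<circ> B)))\<^sup>2 \<le>
       ((\<bar>\<phi> t\<bar>)\<^sup>2 + (\<bar>\<psi> t\<bar>)\<^sup>2) * (onorm (A \<circ> B))\<^sup>2
       + \<bar>\<phi> t * \<psi> t\<bar> * numrad ((A \<circ> B) \<circ> (A \<circ> B))
       + \<bar>\<phi> t * \<psi> t\<bar> * numrad ((adj B \<circ> adj A) \<circ> (adj B \<circ> adj A)))
  \<and> (wnumrad (\<lambda>s. \<phi>1 s + \<phi>2 s) (\<lambda>s. \<psi>1 s + \<psi>2 s) t A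
       \<le> wnumrad \<phi>1 \<psi>1 t A + wnumrad \<phi>2 \<psi>2 t A)
  \<and> (wcrawford \<phi> \<psi> t A \<ge> min \<bar>\<phi> t + \<psi> t\<bar> \<bar>\<phi> t - \<psi> t\<bar> * crawford A)"
proof -
  have ne: "(unit_sphere :: 'a set) \<noteq> {}" by (rule unit_sphere_nonempty[OF nontriv])
  have AB: "bounded_clinear (A \<circ> B)" by (rule bounded_clinear_comp[OF A B])
  have "numrad ((adj B \<circ> adj A) \<circ> (adj B \<circ> adj A)) = numrad ((A \<circ> B) \<circ> (A \<circ> B))"
    using numrad_adj[OF ne bounded_clinear_comp[OF AB AB]] by (simp add: adj_comp A B AB)
  then have norm_AB: "(onorm (wop \<phi> \<psi> t (A \<circ> B)))\<^sup>2 \<le>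
       ((\<bar>\<phi> t\<bar>)\<^sup>2 + (\<bar>\<psi> t\<bar>)\<^sup>2) * (onorm (A \<circ> B))\<^sup>2
       + \<bar>\<phi> t * \<psi> t\<bar> * numrad ((A \<circ> B) \<circ> (A \<circ> B))
       + \<bar>\<phi> t * \<psi> t\<bar> * numrad ((adj B \<circ> adj A) \<circ> (adj B \<circ> adj A))"
    using power2_onorm_wop_le[OF ne AB, of \<phi> \<psi> t] by simp
  show ?thesis
    using norm_AB wnorm_le_2_wnumrad[OF ne A, of \<phi> \<psi> t]
      wnumrad_antidiag[OF ne A, of "\<lambda>_. 1"] wcrawford_antidiag[OF ne A, of "\<lambda>_. 1"]
    by (intro conjI impI)
      (simp_all add: ne A B AB wnumrad_zero_left wcrawford_zero_left wnumrad_zero_right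
        wcrawford_zero_right wnumrad_diag wcrawford_diag numrad_ReOp numrad_ImOp wnumrad_op_scale_ii
        wnumrad_le_wnorm wnumrad_le_numrad wcrawford_ge_crawford wnumrad_selfadjoint
        numrad_eq_onorm_if_selfadjoint wnumrad_adj[symmetric] wnumrad_op_add_le
        wcrawford_op_add_le wcrawford_le_crawford_numrad wnumrad_add_weights_le
        wcrawford_ge_min_crawford add.commute[of "\<psi> t" "\<phi> t"])
qed

end
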